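(* Let $c$ be a prompt, $x_0$ a clean image in $\mathbb{R}^d$, $\epsilon\in\mathbb{R}^d$ a noise vector, $t\in[0,1]$, and $x_t=(1-t)x_0+t\epsilon$; let $v = \epsilon - x_0$ be the forward-process velocity target. Let $v_\theta(x_t,t,c)$ and $v_{\mathrm{old}}(x_t,t,c)$ be the trainable and rollout velocity predictions, with corresponding clean-image predictions $f_\theta = x_t - t\,v_\theta$ and $f_{\mathrm{old}} = x_t - t\,v_{\mathrm{old}}$. Let $r=r(x_0,c)\in[0,1]$ be a normalized optimality score, $A = A(x_0,c) = 2r-1$, and $\beta>0$. Define the DiffusionNFT branches $v_\theta^+ = (1-\beta)v_{\mathrm{old}} + \beta v_\theta$ and $v_\theta^- = (1+\beta)v_{\mathrm{old}} - \beta v_\theta$ and the branch loss \[ \ell_{\mathrm{NFT}} = r\,\|v_\theta^+ - v\|^2 + (1-r)\,\|v_\theta^- - v\|^2. \] Then the prediction-space version $t^2\,\ell_{\mathrm{NFT}}$ of this loss equals, up to a term independent of $\theta$, \[ \beta A(x_0,c)\,\|x_0 - f_\theta(x_t,t,c)\|^2 + \beta\bigl(\beta - A(x_0,c)\bigr)\,\|f_\theta(x_t,t,c) - f_{\mathrm{old}}(x_t,t,c)\|^2 . \] That is, it is the AdvantageFlow per-sample loss with reference regularization strength $\lambda = 0$ and rollout regularization strength chosen as $\gamma_{\mathrm{NFT}}(A) = \beta(\beta - A(x_0,c))$ (with the advantage-weighted term scaled by $\beta$).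
   Context: The AdvantageFlow per-sample loss is $A(x_0,c)\|f_\theta(x_t,t,c)-x_0\|^2 + \gamma\|f_\theta(x_t,t,c)-f_{\mathrm{old}}(x_t,t,c)\|^2 + \lambda\|f_\theta(x_t,t,c)-f_{\mathrm{ref}}(x_t,t,c)\|^2$, where $f_{\mathrm{ref}}$ is a fixed reference predictor and $\gamma,\lambda\ge 0$ are regularization strengths. The passage from velocity losses to prediction losses multiplies by $t^2$, using $t^2\|v_\theta - v\|^2 = \|x_0 - f_\theta\|^2$ and $t^2\|v_\theta - v_{\mathrm{old}}\|^2 = \|f_\theta - f_{\mathrm{old}}\|^2$. $\|\cdot\|$ is the Euclidean norm. *)

theory Defs
  imports "HOL-Analysis.Analysis"
begin

definition xt :: "real ^ 'd \<Rightarrow> real ^ 'd \<Rightarrow> real \<Rightarrow> real ^ 'd" where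
  "xt x0 eps t = (1 - t) *\<^sub>R x0 + t *\<^sub>R eps"

definition pred_from_vel :: "real ^ 'd \<Rightarrow> real \<Rightarrow> real ^ 'd \<Rightarrow> real ^ 'd" where
  "pred_from_vel x t v = x - t *\<^sub>R v"

definition nft_loss :: "real \<Rightarrow> real \<Rightarrow> real ^ 'd \<Rightarrow> real ^ 'd \<Rightarrow> real ^ 'd \<Rightarrow> real" where
  "nft_loss r \<beta> vth vold v =
     r * (norm (((1 - \<beta>) *\<^sub>R vold + \<beta> *\<^sub>R vth) - v))\<^sup>2
     + (1 - r) * (norm (((1 + \<beta>) *\<^sub>R vold - \<beta> *\<^sub>R vth) - v))\<^sup>2"

definition advflow_loss :: "real \<Rightarrow> real \<Rightarrow> real \<Rightarrow> real ^ 'd \<Rightarrow> real ^ 'd \<Rightarrow> real ^ 'd \<Rightarrow> real ^ 'd \<Rightarrow> real" where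
  "advflow_loss A \<gamma> lam x0 fth fo fref =
     A * (norm (fth - x0))\<^sup>2 + \<gamma> * (norm (fth - fo))\<^sup>2 + lam * (norm (fth - fref))\<^sup>2"

end

theory Submission
  imports Defs
begin

text \<open>Write \<open>w = v\<^sub>o\<^sub>l\<^sub>d - v\<close> and \<open>u = v\<^sub>\<theta> - v\<^sub>o\<^sub>l\<^sub>d\<close>. The two DiffusionNFT
  branches deviate from the target by \<open>w \<plusminus> \<beta> u\<close>, so the \<open>r\<close>-mixture of their squared
  errors is \<open>\<parallel>w\<parallel>\<^sup>2 + 2\<beta>A (w \<bullet> u) + \<beta>\<^sup>2\<parallel>u\<parallel>\<^sup>2\<close>: the cross term is weighted by the
  advantage \<open>A = 2r - 1\<close>. In prediction space the errors become
  \<open>x\<^sub>0 - f\<^sub>\<theta> = t (u + w)\<close> and \<open>f\<^sub>\<theta> - f\<^sub>o\<^sub>l\<^sub>d = -t u\<close>, and expanding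
  \<open>\<beta>A\<parallel>u + w\<parallel>\<^sup>2 + \<beta>(\<beta> - A)\<parallel>u\<parallel>\<^sup>2\<close> reproduces the same \<open>\<parallel>u\<parallel>\<^sup>2\<close> and cross terms.
  The two sides differ by \<open>t\<^sup>2(1 - \<beta>A)\<parallel>w\<parallel>\<^sup>2\<close>, which does not involve \<open>\<theta>\<close>.\<close>

lemma norm_add_power2:
  fixes x y :: "'a::real_inner"
  shows "(norm (x + y))\<^sup>2 = (norm x)\<^sup>2 + 2 * (x \<bullet> y) + (norm y)\<^sup>2"
  using dot_norm[of x y] by simp

lemma norm_diff_power2:
  fixes x y :: "'a::real_inner"
  shows "(norm (x - y))\<^sup>2 = (norm x)\<^sup>2 - 2 * (x \<bullet> y) + (norm y)\<^sup>2"
  using dot_norm_neg[of x y] by simp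

lemma convex_comb_norm_add_diff_power2:
  fixes w u :: "'a::real_inner" and r :: real
  shows "r * (norm (w + u))\<^sup>2 + (1 - r) * (norm (w - u))\<^sup>2
    = (norm w)\<^sup>2 + (2 * r - 1) * (2 * (w \<bullet> u)) + (norm u)\<^sup>2"
  unfolding norm_add_power2 norm_diff_power2 by (simp add: algebra_simps)

lemma nft_loss_expand:
  "nft_loss r \<beta> vth vold v
    = (norm (vold - v))\<^sup>2 + \<beta> * (2 * r - 1) * (2 * ((vold - v) \<bullet> (vth - vold)))
      + \<beta>\<^sup>2 * (norm (vth - vold))\<^sup>2"
proof -
  have plus: "((1 - \<beta>) *\<^sub>R vold + \<beta> *\<^sub>R vth) - v = (vold - v) + \<beta> *\<^sub>R (vth - vold)"
    and minus: "((1 + \<beta>) *\<^sub>R vold - \<beta> *\<^sub>R vth) - v = (vold - v) - \<beta> *\<^sub>R (vth - vold)"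
    by (simp_all add: algebra_simps)
  show ?thesis
    unfolding nft_loss_def plus minus convex_comb_norm_add_diff_power2
    by (simp add: power_mult_distrib)
qed

lemma pred_from_vel_xt_diff:
  "pred_from_vel (xt x0 eps t) t a - x0 = t *\<^sub>R ((eps - x0) - a)"
  by (simp add: pred_from_vel_def xt_def algebra_simps)

lemma pred_from_vel_diff:
  "pred_from_vel x t a - pred_from_vel x t b = t *\<^sub>R (b - a)"
  by (simp add: pred_from_vel_def algebra_simps)

lemma nft_loss_prediction_space:
  fixes x0 eps a vo fref :: "real ^ 'd" and r t \<beta> :: real
  defines "A \<equiv> 2 * r - 1" and "X \<equiv> xt x0 eps t"
  shows "t\<^sup>2 * nft_loss r \<beta> a vo (eps - x0)
    = \<beta> * advflow_loss A (\<beta> - A) 0 x0 (pred_from_vel X t a) (pred_from_vel X t vo) fref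
      + t\<^sup>2 * (1 - \<beta> * A) * (norm (vo - (eps - x0)))\<^sup>2"
proof -
  define w where "w = vo - (eps - x0)"
  define u where "u = a - vo"
  have "pred_from_vel X t a - x0 = - (t *\<^sub>R (u + w))"
    by (simp add: X_def pred_from_vel_xt_diff u_def w_def algebra_simps)
  then have "(norm (pred_from_vel X t a - x0))\<^sup>2 = t\<^sup>2 * (norm (u + w))\<^sup>2"
    by (simp add: power_mult_distrib)
  moreover have "(norm (pred_from_vel X t a - pred_from_vel X t vo))\<^sup>2 = t\<^sup>2 * (norm u)\<^sup>2"
    by (simp add: pred_from_vel_diff power_mult_distrib norm_minus_commute u_def)
  ultimately have "advflow_loss A (\<beta> - A) 0 x0 (pred_from_vel X t a) (pred_from_vel X t vo) fref
      = t\<^sup>2 * (A * (norm (u + w))\<^sup>2 + (\<beta> - A) * (norm u)\<^sup>2)"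
    by (simp add: advflow_loss_def algebra_simps)
  moreover have "nft_loss r \<beta> a vo (eps - x0) = (norm w)\<^sup>2 + \<beta> * A * (2 * (w \<bullet> u)) + \<beta>\<^sup>2 * (norm u)\<^sup>2"
    by (simp add: nft_loss_expand A_def u_def w_def)
  ultimately show ?thesis
    unfolding norm_add_power2 w_def[symmetric]
    by (simp add: inner_commute[of u w] algebra_simps power2_eq_square)
qed

theorem proposition3:
  fixes x0 eps :: "real ^ 'd" and c :: 'c and t \<beta> :: real
    and r :: "real ^ 'd \<Rightarrow> 'c \<Rightarrow> real"
    and v_\<theta> :: "'p \<Rightarrow> real ^ 'd \<Rightarrow> real \<Rightarrow> 'c \<Rightarrow> real ^ 'd"
    and v_old :: "real ^ 'd \<Rightarrow> real \<Rightarrow> 'c \<Rightarrow> real ^ 'd"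
    and f_ref :: "real ^ 'd \<Rightarrow> real \<Rightarrow> 'c \<Rightarrow> real ^ 'd"
  assumes "0 \<le> t" "t \<le> 1"
    and "0 \<le> r x0 c" "r x0 c \<le> 1"
    and "\<beta> > 0"
  shows "\<exists>K::real. \<forall>\<theta>.
    t\<^sup>2 * nft_loss (r x0 c) \<beta> (v_\<theta> \<theta> (xt x0 eps t) t c) (v_old (xt x0 eps t) t c) (eps - x0)
    = \<beta> * advflow_loss (2 * r x0 c - 1) (\<beta> - (2 * r x0 c - 1)) 0 x0
          (pred_from_vel (xt x0 eps t) t (v_\<theta> \<theta> (xt x0 eps t) t c))
          (pred_from_vel (xt x0 eps t) t (v_old (xt x0 eps t) t c))
          (f_ref (xt x0 eps t) t c)
      + K"
  \<comment> \<open>The identity is purely algebraic.\<close>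
  using nft_loss_prediction_space by blast

end
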